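(* Let $p\geq 2$ be an integer, $n=2^p-1$ and $s=3\cdot 2^{p-2}$. Then there exists a perfect code $C$ in the hypercube $Q_n$ such that no element of $C$ contains $1^s$ as a substring.
   Context: The $n$-cube $Q_n$ is the graph whose vertex set is the set $\mathbb{B}_n$ of binary strings of length $n$, two strings being adjacent if they differ in exactly one position; its graph distance is the Hamming distance. A perfect code in a graph $G$ is a set $C$ of vertices such that every vertex of $G$ lies in the closed neighbourhood $N[c]=\{v: d_G(c,v)\le 1\}$ of exactly one vertex $c\in C$ (equivalently, $C$ is a dominating set and any two distinct elements of $C$ are at distance at least $3$). $1^s$ denotes the string of $s$ consecutive 1's; a string $\bm{f}$ is a substring of $\bm{s}$ if $\bm{s}=\bm{x}\bm{f}\bm{y}$ for some (possibly empty) strings $\bm{x},\bm{y}$. *)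

theory Defs
  imports Main "HOL-Library.Sublist"
begin

definition bstrings :: "nat \<Rightarrow> bool list set" where
  "bstrings n = {x. length x = n}"

text \<open>Hamming distance = graph distance of Q_n.\<close>
definition hamming :: "bool list \<Rightarrow> bool list \<Rightarrow> nat" where
  "hamming x y = card {i. i < length x \<and> x ! i \<noteq> y ! i}"

definition closed_nbhd :: "nat \<Rightarrow> bool list \<Rightarrow> bool list set" where
  "closed_nbhd n c = {v \<in> bstrings n. hamming c v \<le> 1}"

definition perfect_code :: "nat \<Rightarrow> bool list set \<Rightarrow> bool" where
  "perfect_code n C \<longleftrightarrow> C \<subseteq> bstrings n \<and>
     (\<forall>v \<in> bstrings n. \<exists>!c. c \<in> C \<and> v \<in> closed_nbhd n c)"

text \<open>The string 1^s (True encodes the bit 1).\<close>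
definition ones :: "nat \<Rightarrow> bool list" where
  "ones s = replicate s True"

end

theory Submission imports Defs begin

text \<open>
Label the positions of a string of length \<open>n = 2^p - 1\<close> bijectively by the nonzero
\<open>p\<close>-bit numbers, and call the XOR of the labels of the 1-positions the syndrome. Flipping a
bit changes the syndrome by that position's label, so every syndrome class is a perfect code
(a Hamming code). With \<open>k = 2^(p-2)\<close>, rotate the labels so that position \<open>i\<close> gets
\<open>i + k\<close> (cyclically in \<open>1..n\<close>): the labels with top bit set sit exactly at the \<open>2k\<close>
positions \<open>k, \<dots>, 3k - 1\<close>. Any run of \<open>3k\<close> ones in a string of length \<open>4k - 1\<close> covers
these positions, so the top bit of its syndrome is the parity of \<open>2k\<close>, namely 0; hence the
class with syndrome \<open>2k\<close> contains no such run.
\<close>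

unbundle bit_operations_syntax

lemma xor_cancel_left [simp]: "(a::nat) XOR a XOR b = b"
  by (simp add: xor.assoc[symmetric])

lemma xor_eq_iff_eq_xor: "(a::nat) XOR b = c \<longleftrightarrow> b = a XOR c"
  by auto

lemma xor_less_power:
  assumes "(a::nat) < 2^m" and "b < 2^m"
  shows "a XOR b < 2^m"
proof -
  have "take_bit m a = a" "take_bit m b = b"
    using assms by (simp_all add: take_bit_nat_eq_self_iff)
  then have "take_bit m (a XOR b) = a XOR b"
    by (simp only: take_bit_xor)
  then show ?thesis by (simp only: take_bit_nat_eq_self_iff)
qed

lemma bit_iff_ge_power:
  assumes "(a::nat) < 2^Suc m"
  shows "bit a m \<longleftrightarrow> 2^m \<le> a"
proof -
  have "a div 2^m < 2" using assms by (simp add: less_mult_imp_div_less)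
  then have "a div 2^m = 0 \<or> a div 2^m = 1" by linarith
  moreover have "2^m \<le> a \<longleftrightarrow> a div 2^m \<noteq> 0"
    using div_greater_zero_iff[of a "2^m"] by simp
  ultimately show ?thesis by (auto simp: bit_iff_odd)
qed

definition flip :: "bool list \<Rightarrow> nat \<Rightarrow> bool list" where
  "flip v i = v[i := \<not> v ! i]"

lemma length_flip [simp]: "length (flip v i) = length v"
  by (simp add: flip_def)

lemma hamming_self [simp]: "hamming v v = 0"
  by (simp add: hamming_def)

lemma hamming_flip:
  assumes "i < length v"
  shows "hamming (flip v i) v = 1"
proof -
  have "{j. j < length (flip v i) \<and> flip v i ! j \<noteq> v ! j} = {i}"
    using assms by (auto simp: flip_def nth_list_update)
  then show ?thesis by (simp add: hamming_def)
qed

lemma hamming_le_1_imp_eq_or_flip: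
  assumes len: "length c = length v" and dist: "hamming c v \<le> 1"
  shows "c = v \<or> (\<exists>i < length v. c = flip v i)"
proof -
  let ?D = "{i. i < length c \<and> c ! i \<noteq> v ! i}"
  have "card ?D \<le> 1" using dist by (simp only: hamming_def)
  then consider "card ?D = 0" | "card ?D = 1" by linarith
  then show ?thesis
  proof cases
    case 1
    then have "?D = {}" by simp
    then show ?thesis using len by (auto intro: nth_equalityI)
  next
    case 2
    then obtain i where D: "?D = {i}" by (auto simp: card_Suc_eq)
    then have i: "i < length v" "c ! i \<noteq> v ! i" using len by auto
    have "c = flip v i"
    proof (rule nth_equalityI)
      fix j assume "j < length c"
      then show "c ! j = flip v i ! j" using D i len
        by (cases "j = i") (auto simp: flip_def nth_list_update)
    qed (simp add: len)
    then show ?thesis using i by blast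
  qed
qed

lemma mem_closed_nbhd_iff:
  assumes "c \<in> bstrings n" and "v \<in> bstrings n"
  shows "v \<in> closed_nbhd n c \<longleftrightarrow> c = v \<or> (\<exists>i < n. c = flip v i)"
  using assms hamming_le_1_imp_eq_or_flip[of c v] hamming_flip[of _ v]
  by (auto simp: closed_nbhd_def bstrings_def)

fun syndrome :: "(nat \<Rightarrow> nat) \<Rightarrow> bool list \<Rightarrow> nat \<Rightarrow> nat" where
  "syndrome f x 0 = 0"
| "syndrome f x (Suc k) = (if x ! k then f k XOR syndrome f x k else syndrome f x k)"

lemma syndrome_cong: "(\<And>i. i < k \<Longrightarrow> x ! i = y ! i) \<Longrightarrow> syndrome f x k = syndrome f y k"
  by (induction k) auto

lemma syndrome_flip:
  assumes "i < k" and "i < length x"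
  shows "syndrome f (flip x i) k = syndrome f x k XOR f i"
  using assms
proof (induction k)
  case (Suc k)
  show ?case
  proof (cases "i = k")
    case True
    have "syndrome f (flip x i) k = syndrome f x k"
      by (rule syndrome_cong) (use True in \<open>auto simp: flip_def\<close>)
    then show ?thesis using True Suc.prems
      by (auto simp: flip_def xor.commute xor.left_commute)
  next
    case False
    then show ?thesis using Suc by (auto simp: flip_def xor.commute xor.left_commute)
  qed
qed simp

lemma bit_syndrome_iff:
  "bit (syndrome f x k) j \<longleftrightarrow> odd (card {i. i < k \<and> x ! i \<and> bit (f i) j})"
proof (induction k)
  case (Suc k)
  have "{i. i < Suc k \<and> x ! i \<and> bit (f i) j} =
     (if x ! k \<and> bit (f k) j then insert k {i. i < k \<and> x ! i \<and> bit (f i) j}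
      else {i. i < k \<and> x ! i \<and> bit (f i) j})"
    by (auto simp: less_Suc_eq)
  then show ?case using Suc by (simp add: bit_xor_iff)
qed simp

lemma bit_syndrome_iff_if_covers:
  assumes "\<And>i. i < k \<Longrightarrow> bit (f i) j \<Longrightarrow> x ! i"
  shows "bit (syndrome f x k) j \<longleftrightarrow> odd (card {i. i < k \<and> bit (f i) j})"
proof -
  have "{i. i < k \<and> x ! i \<and> bit (f i) j} = {i. i < k \<and> bit (f i) j}"
    using assms by blast
  then show ?thesis by (simp add: bit_syndrome_iff)
qed

lemma syndrome_less_power: "(\<And>i. i < k \<Longrightarrow> f i < 2^m) \<Longrightarrow> syndrome f x k < 2^m"
  by (induction k) (simp_all add: xor_less_power)

lemma perfect_code_syndrome_class:
  assumes f: "bij_betw f {..<n} {1..<2^m}" and t: "t < 2^m"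
  shows "perfect_code n {x \<in> bstrings n. syndrome f x n = t}"
    (is "perfect_code n ?C")
  unfolding perfect_code_def
proof (intro conjI ballI)
  show "?C \<subseteq> bstrings n" by blast
  fix v assume v: "v \<in> bstrings n"
  then have len: "length v = n" by (simp add: bstrings_def)
  define d where "d = syndrome f v n XOR t"
  have flip_in_C: "flip v i \<in> ?C \<longleftrightarrow> f i = d" if "i < n" for i
    using that len by (auto simp: bstrings_def syndrome_flip d_def xor_eq_iff_eq_xor xor.commute)
  have v_in_C: "v \<in> ?C \<longleftrightarrow> d = 0"
    using v by (auto simp: d_def xor_eq_iff_eq_xor)
  have near: "{c. c \<in> ?C \<and> v \<in> closed_nbhd n c} =
      (if d = 0 then {v} else {}) \<union> flip v ` {i. i < n \<and> f i = d}"
  proof -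
    have "{c. c \<in> ?C \<and> v \<in> closed_nbhd n c} = {c. c \<in> ?C \<and> (c = v \<or> (\<exists>i < n. c = flip v i))}"
      using mem_closed_nbhd_iff[OF _ v] by blast
    also have "\<dots> = (if d = 0 then {v} else {}) \<union> flip v ` {i. i < n \<and> f i = d}"
      using v_in_C flip_in_C by auto
    finally show ?thesis .
  qed
  have "\<exists>c. {c. c \<in> ?C \<and> v \<in> closed_nbhd n c} = {c}"
  proof (cases "d = 0")
    case True
    have "{i. i < n \<and> f i = d} = {}"
      using bij_betw_apply[OF f] True by fastforce
    then show ?thesis unfolding near using True by auto
  next
    case False
    have "syndrome f v n < 2^m"
      using bij_betw_apply[OF f] by (intro syndrome_less_power) auto
    then have "d \<in> f ` {..<n}"
      using False t bij_betw_imp_surj_on[OF f] by (simp add: d_def xor_less_power)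
    then obtain i where i: "i < n" "f i = d" by auto
    then have "{i. i < n \<and> f i = d} = {i}"
      using inj_onD[OF bij_betw_imp_inj_on[OF f]] by auto
    then show ?thesis unfolding near using False by auto
  qed
  then show "\<exists>!c. c \<in> ?C \<and> v \<in> closed_nbhd n c"
    by (metis (no_types, lifting) mem_Collect_eq singleton_iff)
qed

definition rotated_label :: "nat \<Rightarrow> nat \<Rightarrow> nat" where
  "rotated_label k i = (if i + k \<le> 4*k - 1 then i + k else i + k + 1 - 4*k)"

lemma bij_betw_rotated_label:
  assumes "1 \<le> k"
  shows "bij_betw (rotated_label k) {..<4*k - 1} {1..<4*k}"
proof (rule bij_betw_imageI)
  show "inj_on (rotated_label k) {..<4*k - 1}"
    using assms by (auto simp: inj_on_def rotated_label_def split: if_splits)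
  show "rotated_label k ` {..<4*k - 1} = {1..<4*k}"
  proof
    show "rotated_label k ` {..<4*k - 1} \<subseteq> {1..<4*k}"
      using assms by (auto simp: rotated_label_def)
    show "{1..<4*k} \<subseteq> rotated_label k ` {..<4*k - 1}"
    proof
      fix t assume t: "t \<in> {1..<4*k}"
      show "t \<in> rotated_label k ` {..<4*k - 1}"
      proof (cases "k \<le> t")
        case True
        then show ?thesis using t by (intro image_eqI[of _ _ "t - k"]) (auto simp: rotated_label_def)
      next
        case False
        then show ?thesis using t by (intro image_eqI[of _ _ "t + 3*k - 1"]) (auto simp: rotated_label_def)
      qed
    qed
  qed
qed

lemma rotated_label_ge_iff:
  assumes "1 \<le> k" and "i < 4*k - 1"
  shows "2*k \<le> rotated_label k i \<longleftrightarrow> k \<le> i \<and> i < 3*k"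
  using assms by (auto simp: rotated_label_def)

lemma bit_rotated_label_iff:
  assumes "i < 4 * 2^r - 1"
  shows "bit (rotated_label (2^r) i) (Suc r) \<longleftrightarrow> 2^r \<le> i \<and> i < 3 * 2^r"
proof -
  have "rotated_label (2^r) i < 2^Suc (Suc r)"
    using bij_betw_rotated_label[of "2^r"] assms by (auto dest: bij_betwE)
  then show ?thesis
    using bit_iff_ge_power rotated_label_ge_iff[of "2^r" i] assms by simp
qed

lemma syndrome_rotated_label_if_long_run:
  assumes k: "k = 2^r" and len: "length c = 4*k - 1" and run: "sublist (ones (3*k)) c"
  shows "syndrome (rotated_label k) c (4*k - 1) \<noteq> 2*k"
proof
  obtain xs ys where c: "c = xs @ replicate (3*k) True @ ys"
    using run by (auto simp: sublist_def ones_def)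
  moreover have "0 < k" using k by simp
  ultimately have "length xs < k" using len by simp
  then have ones_on_window: "c ! i" if "k \<le> i" "i < 3*k" for i
    using that c by (auto simp: nth_append)
  have window: "{i. i < 4*k - 1 \<and> bit (rotated_label k i) (Suc r)} = {k..<3*k}"
    using bit_rotated_label_iff k by auto
  have "\<not> bit (syndrome (rotated_label k) c (4*k - 1)) (Suc r)"
    using bit_syndrome_iff_if_covers[of "4*k - 1" "rotated_label k" "Suc r" c]
      bit_rotated_label_iff ones_on_window k window by auto
  moreover assume "syndrome (rotated_label k) c (4*k - 1) = 2*k"
  moreover have "bit (2*k) (Suc r)" using k by (simp add: bit_double_iff bit_exp_iff)
  ultimately show False by simp
qed

theorem theorem2:
  fixes p :: nat
  assumes "p \<ge> 2"
  shows "\<exists>C. perfect_code (2^p - 1) C \<and>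
           (\<forall>c \<in> C. \<not> sublist (ones (3 * 2^(p-2))) c)"
proof -
  obtain r where p: "p = Suc (Suc r)" using assms by (metis add_2_eq_Suc le_Suc_ex)
  define k :: nat where "k = 2^r"
  have n: "2^p - 1 = 4*k - 1" and s: "3 * 2^(p-2) = 3*k" and m: "2^p = 4*k"
    using p by (simp_all add: k_def)
  let ?C = "{x \<in> bstrings (4*k - 1). syndrome (rotated_label k) x (4*k - 1) = 2*k}"
  have "perfect_code (4*k - 1) ?C"
    using perfect_code_syndrome_class[of "rotated_label k" "4*k - 1" p "2*k"]
      bij_betw_rotated_label[of k] m by (simp add: k_def)
  moreover have "\<forall>c \<in> ?C. \<not> sublist (ones (3*k)) c"
    using syndrome_rotated_label_if_long_run[OF k_def] by (auto simp: bstrings_def)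
  ultimately show ?thesis unfolding n s by blast
qed

end
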